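(* Let $\Gamma$ be a group, $S\subset\Gamma$ finite, $0<\delta\le\frac12$, and let $\rho:\Gamma\to U(n)$ be a unital map with $\|\rho(st)-\rho(s)\rho(t)\|<\delta$ for all $s,t\in S$. For $a,b\in S$ put $$\omega(a,b)=\frac{1}{2\pi i}\mathrm{Tr}\big(\log(\rho(a)\rho(b)\rho(ab)^{-1})\big).$$ If $a,b,c,ab,bc\in S$, then $\omega(a,b)+\omega(ab,c)=\omega(a,bc)+\omega(b,c)$.
   Context: $\log$ denotes the power series centered at $1$, $\log(u)=\sum_{k\ge1}(-1)^{k+1}(u-1)^k/k$, which converges for $\|u-1\|<1$; $\mathrm{Tr}$ is the (unnormalized) matrix trace. *)

theory Defs
  imports "HOL-Analysis.Analysis" "HOL-Algebra.Group"
begin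

definition cadj :: "complex^'n^'n \<Rightarrow> complex^'n^'n" where
  "cadj A = (\<chi> i j. cnj (A $ j $ i))"

definition unitary_mat :: "complex^'n^'n \<Rightarrow> bool" where
  "unitary_mat A \<longleftrightarrow> A ** cadj A = mat 1 \<and> cadj A ** A = mat 1"

definition opnorm :: "complex^'n^'n \<Rightarrow> real" where
  "opnorm A = onorm (\<lambda>x. A *v x)"

fun mpow :: "complex^'n^'n \<Rightarrow> nat \<Rightarrow> complex^'n^'n" where
  "mpow A 0 = mat 1"
| "mpow A (Suc k) = A ** mpow A k"

definition mlog :: "complex^'n^'n \<Rightarrow> complex^'n^'n" where
  "mlog u = (\<Sum>k. scaleR ((-1) ^ k / real (Suc k)) (mpow (u - mat 1) (Suc k)))"

definition omega :: "('a, 'b) monoid_scheme \<Rightarrow> ('a \<Rightarrow> complex^'n^'n) \<Rightarrow> 'a \<Rightarrow> 'a \<Rightarrow> complex" where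
  "omega G \<rho> a b =
     trace (mlog (\<rho> a ** \<rho> b ** matrix_inv (\<rho> (a \<otimes>\<^bsub>G\<^esub> b)))) / (2 * complex_of_real pi * \<i>)"

end

theory Submission
  imports Defs
begin

text \<open>
  For u near 1 the series for Tr log u may be differentiated termwise: along an affine path u(s),
  (Tr log u)' = Tr (u^-1 u'). On the paths s |-> (1 + sX) y and s |-> 1 + sX these derivatives
  coincide by cyclicity of the trace, so Tr log (x y) = Tr log x + Tr log y whenever
  ||x - 1|| + ||y - 1|| < 1 and ||y|| <= 1 in the operator norm.
  Writing u(s,t) = rho(s) rho(t) rho(st)^*, which is unitary and within delta <= 1/2 of 1, the
  unitary rho(a) rho(b) rho(c) rho(abc)^* factors both as u(a,b) u(ab,c) and as
  rho(a) u(b,c) rho(a)^* u(a,bc); conjugation does not change Tr log, and additivity on both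
  factorisations gives the cocycle identity.
\<close>

section \<open>Matrix algebra\<close>

lemma matrix_add_rdistrib:
  fixes A B :: "'a::semiring_1^'n^'m"
  shows "(A + B) ** C = A ** C + B ** C"
  by (simp add: matrix_matrix_mult_def vec_eq_iff sum.distrib distrib_right)

lemma matrix_diff_rdistrib:
  fixes A B :: "'a::ring_1^'n^'m"
  shows "(A - B) ** C = A ** C - B ** C"
  by (simp add: matrix_matrix_mult_def vec_eq_iff sum_subtractf left_diff_distrib)

lemma matrix_diff_ldistrib:
  fixes A :: "'a::ring_1^'n^'m"
  shows "A ** (B - C) = A ** B - A ** C"
  by (simp add: matrix_matrix_mult_def vec_eq_iff sum_subtractf right_diff_distrib)

lemma matrix_mul_lzero: "(0::'a::semiring_1^'n^'m) ** A = 0"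
  by (simp add: matrix_matrix_mult_def vec_eq_iff)

lemma matrix_mul_sum_right:
  fixes A :: "'a::semiring_1^'n^'m"
  shows "A ** sum f S = (\<Sum>i\<in>S. A ** f i)"
  by (simp add: matrix_matrix_mult_def vec_eq_iff sum_distrib_left sum.swap[of _ S])

lemma trace_sum: "trace (sum f S) = (\<Sum>i\<in>S. trace (f i))"
  by (simp add: trace_def sum.swap[of _ S])

lemma trace_scaleR: "trace (c *\<^sub>R (A::'a::real_algebra_1^'n^'n)) = c *\<^sub>R trace A"
  by (simp add: trace_def scaleR_sum_right)

lemma matrix_mul_scaleR_left: "(c *\<^sub>R A) ** B = c *\<^sub>R (A ** (B::'a::real_algebra_1^'n^'m))"
  by (simp add: scalar_matrix_assoc)

lemma matrix_mul_scaleR_right: "A ** (c *\<^sub>R B) = c *\<^sub>R (A ** (B::'a::real_algebra_1^'n^'m))"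
  by (simp add: matrix_scalar_ac scalar_matrix_assoc)

lemma bounded_bilinear_matrix_mult:
  "bounded_bilinear ((**) :: complex^'n^'n \<Rightarrow> complex^'n^'n \<Rightarrow> complex^'n^'n)"
proof -
  have "bilinear ((**) :: complex^'n^'n \<Rightarrow> complex^'n^'n \<Rightarrow> complex^'n^'n)"
    unfolding bilinear_def
    by (auto intro!: linearI simp: matrix_add_ldistrib matrix_add_rdistrib
        matrix_mul_scaleR_left matrix_mul_scaleR_right)
  then show ?thesis
    using bilinear_conv_bounded_bilinear by blast
qed

lemma bounded_linear_trace: "bounded_linear (trace :: complex^'n^'n \<Rightarrow> complex)"
  unfolding trace_def[abs_def]
  by (intro bounded_linear_sum bounded_linear_compose[OF bounded_linear_vec_nth bounded_linear_vec_nth])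

lemma matrix_inv_unique:
  fixes A :: "'a::semiring_1^'n^'n"
  assumes "A ** B = mat 1" "B ** A = mat 1"
  shows "matrix_inv A = B"
proof -
  have left_inverse: "matrix_inv A ** A = mat 1"
    unfolding matrix_inv_def by (rule conjunct2, rule someI[of _ B]) (use assms in blast)
  have "matrix_inv A = matrix_inv A ** (A ** B)"
    using assms(1) by simp
  also have "\<dots> = (matrix_inv A ** A) ** B"
    by (rule matrix_mul_assoc)
  finally show ?thesis
    using left_inverse by simp
qed

lemma invertible_matrix_inv:
  fixes A :: "'a::semiring_1^'n^'n"
  assumes "invertible A"
  shows "A ** matrix_inv A = mat 1" "matrix_inv A ** A = mat 1"
  using someI_ex[OF assms[unfolded invertible_def]] by (simp_all add: matrix_inv_def)

lemma matrix_inv_mult: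
  fixes A B :: "'a::semiring_1^'n^'n"
  assumes "invertible A" "invertible B"
  shows "matrix_inv (A ** B) = matrix_inv B ** matrix_inv A"
proof (rule matrix_inv_unique)
  have "A ** B ** (matrix_inv B ** matrix_inv A) = A ** (B ** matrix_inv B) ** matrix_inv A"
    by (simp add: matrix_mul_assoc)
  then show "A ** B ** (matrix_inv B ** matrix_inv A) = mat 1"
    using assms by (simp add: invertible_matrix_inv)
  have "matrix_inv B ** matrix_inv A ** (A ** B) = matrix_inv B ** (matrix_inv A ** A) ** B"
    by (simp add: matrix_mul_assoc)
  then show "matrix_inv B ** matrix_inv A ** (A ** B) = mat 1"
    using assms by (simp add: invertible_matrix_inv)
qed

section \<open>Operator norm and unitary matrices\<close>

lemma opnorm_nonneg: "0 \<le> opnorm A"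
  unfolding opnorm_def by (rule onorm_pos_le[OF matrix_vector_mul_bounded_linear])

lemma norm_matrix_vector_mult_le: "norm (A *v x) \<le> opnorm A * norm x"
  unfolding opnorm_def by (rule onorm[OF matrix_vector_mul_bounded_linear])

lemma opnorm_mult_le: "opnorm (A ** B) \<le> opnorm A * opnorm B"
proof -
  have "(*v) (A ** B) = (*v) A \<circ> (*v) B"
    by (auto simp: matrix_vector_mul_assoc)
  then show ?thesis
    unfolding opnorm_def
    using onorm_compose[OF matrix_vector_mul_bounded_linear matrix_vector_mul_bounded_linear]
    by simp
qed

lemma opnorm_triangle: "opnorm (A + B) \<le> opnorm A + opnorm B"
proof -
  have "(*v) (A + B) = (\<lambda>x. A *v x + B *v x)"
    by (auto simp: matrix_vector_mult_add_rdistrib)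
  then show ?thesis
    unfolding opnorm_def
    using onorm_triangle[OF matrix_vector_mul_bounded_linear matrix_vector_mul_bounded_linear]
    by simp
qed

lemma opnorm_scaleR: "opnorm (c *\<^sub>R A) = \<bar>c\<bar> * opnorm A"
proof -
  have "(*v) (c *\<^sub>R A) = (\<lambda>x. c *\<^sub>R (A *v x))"
    by (auto simp: matrix_vector_mult_def vec_eq_iff scaleR_sum_right)
  then show ?thesis
    unfolding opnorm_def using onorm_scaleR[OF matrix_vector_mul_bounded_linear] by simp
qed

lemma opnorm_minus_commute: "opnorm (A - B) = opnorm (B - A)"
  using opnorm_scaleR[of "-1" "A - B"] by simp

lemma opnorm_mat_1_le: "opnorm (mat 1 :: complex^'n^'n) \<le> 1"
proof -
  have "(*v) (mat 1 :: complex^'n^'n) = (\<lambda>x. x)"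
    by auto
  then show ?thesis
    unfolding opnorm_def using onorm_id_le by simp
qed

lemma norm_matrix_entry_le_opnorm: "norm (A $ i $ j) \<le> opnorm A"
proof -
  have "norm (A $ i $ j) = norm ((A *v axis j 1) $ i)"
    by (simp add: matrix_vector_mult_def axis_def if_distrib cong: if_cong)
  also have "\<dots> \<le> norm (A *v axis j 1)"
    by (rule Finite_Cartesian_Product.norm_nth_le)
  also have "\<dots> \<le> opnorm A"
    using norm_matrix_vector_mult_le[of A "axis j 1"] by (simp add: inner_axis' norm_eq_1)
  finally show ?thesis .
qed

lemma norm_matrix_le_opnorm: "norm A \<le> real CARD('n)^2 * opnorm (A::complex^'n^'n)"
proof -
  have "norm A \<le> (\<Sum>i\<in>UNIV. norm (A $ i))"
    by (simp add: norm_vec_def L2_set_le_sum)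
  also have "\<dots> \<le> (\<Sum>i\<in>UNIV. \<Sum>j\<in>UNIV. norm (A $ i $ j))"
    by (intro sum_mono) (simp add: norm_vec_def L2_set_le_sum)
  also have "\<dots> \<le> (\<Sum>i\<in>(UNIV::'n set). \<Sum>j\<in>(UNIV::'n set). opnorm A)"
    by (intro sum_mono norm_matrix_entry_le_opnorm)
  finally show ?thesis
    by (simp add: power2_eq_square)
qed

lemma norm_trace_le_opnorm: "norm (trace A) \<le> real CARD('n) * opnorm (A::complex^'n^'n)"
proof -
  have "norm (trace A) \<le> (\<Sum>i\<in>UNIV. norm (A $ i $ i))"
    unfolding trace_def by (rule norm_sum)
  also have "\<dots> \<le> (\<Sum>i\<in>(UNIV::'n set). opnorm A)"
    by (intro sum_mono norm_matrix_entry_le_opnorm)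
  finally show ?thesis
    by simp
qed

lemma cadj_mult: "cadj (A ** B) = cadj B ** cadj A"
  by (simp add: cadj_def matrix_matrix_mult_def vec_eq_iff mult.commute)

lemma cadj_cadj [simp]: "cadj (cadj A) = A"
  by (simp add: cadj_def vec_eq_iff)

lemma unitary_mat_cadj: "unitary_mat A \<Longrightarrow> unitary_mat (cadj A)"
  by (simp add: unitary_mat_def)

lemma unitary_mat_mult: "unitary_mat A \<Longrightarrow> unitary_mat B \<Longrightarrow> unitary_mat (A ** B)"
  unfolding unitary_mat_def cadj_mult by (metis matrix_mul_assoc matrix_mul_lid)

lemma unitary_mat_cancel: "unitary_mat W \<Longrightarrow> A ** cadj W ** W = A"
  unfolding unitary_mat_def by (metis matrix_mul_assoc matrix_mul_rid)

lemma matrix_inv_unitary: "unitary_mat A \<Longrightarrow> matrix_inv A = cadj A"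
  unfolding unitary_mat_def by (intro matrix_inv_unique) auto

lemma norm_vec_squared: "complex_of_real ((norm x)^2) = (\<Sum>i\<in>UNIV. x $ i * cnj (x $ i))"
proof -
  have "(norm x)^2 = (\<Sum>i\<in>UNIV. (cmod (x $ i))^2)"
    by (simp add: norm_vec_def L2_set_def sum_nonneg)
  then show ?thesis
    by (simp only: of_real_sum complex_norm_square)
qed

lemma norm_matrix_vector_mult_isometry:
  assumes "cadj U ** U = mat 1"
  shows "norm (U *v x) = norm x"
proof -
  have columns_orthonormal: "(\<Sum>i\<in>UNIV. cnj (U $ i $ k) * U $ i $ j) = (if k = j then 1 else 0)"
    for k j
    using arg_cong[OF assms, of "\<lambda>M. M $ k $ j"]
    by (simp add: matrix_matrix_mult_def cadj_def mat_def)
  have "complex_of_real ((norm (U *v x))^2)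
      = (\<Sum>i\<in>UNIV. \<Sum>j\<in>UNIV. \<Sum>k\<in>UNIV. (x $ j * cnj (x $ k)) * (cnj (U $ i $ k) * U $ i $ j))"
    unfolding norm_vec_squared matrix_vector_mult_def sum_product
    by (simp add: sum_distrib_left mult_ac) (intro sum.cong refl sum.swap)
  also have "\<dots> = (\<Sum>j\<in>UNIV. \<Sum>k\<in>UNIV. (x $ j * cnj (x $ k)) * (\<Sum>i\<in>UNIV. cnj (U $ i $ k) * U $ i $ j))"
    unfolding sum_distrib_left by (subst sum.swap) (intro sum.cong refl sum.swap)
  also have "\<dots> = complex_of_real ((norm x)^2)"
    unfolding norm_vec_squared columns_orthonormal by (simp add: if_distrib cong: if_cong)
  finally have "(norm (U *v x))^2 = (norm x)^2"
    using of_real_eq_iff by blast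
  then show ?thesis
    by (simp add: power2_eq_iff_nonneg)
qed

lemma opnorm_unitary_le: "unitary_mat U \<Longrightarrow> opnorm U \<le> 1"
  unfolding opnorm_def unitary_mat_def by (rule onorm_le) (simp add: norm_matrix_vector_mult_isometry)

lemma opnorm_mult_cadj_minus_mat_1_le:
  assumes "unitary_mat W"
  shows "opnorm (A ** cadj W - mat 1) \<le> opnorm (W - A)"
proof -
  have "A ** cadj W - mat 1 = (A - W) ** cadj W"
    using assms by (simp add: matrix_diff_rdistrib unitary_mat_def)
  then have "opnorm (A ** cadj W - mat 1) \<le> opnorm (A - W) * opnorm (cadj W)"
    by (simp add: opnorm_mult_le)
  also have "\<dots> \<le> opnorm (A - W)"
    using opnorm_unitary_le[OF unitary_mat_cadj[OF assms]]
    by (simp add: mult_left_le opnorm_nonneg)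
  finally show ?thesis
    by (simp add: opnorm_minus_commute)
qed

section \<open>The logarithm series\<close>

lemma mpow_add: "mpow A (m + k) = mpow A m ** mpow A k"
  by (induction m) (simp_all add: matrix_mul_assoc)

lemma mpow_Suc_right: "mpow A (Suc m) = mpow A m ** A"
  using mpow_add[of A m 1] by simp

lemma mpow_zero_Suc: "mpow 0 (Suc k) = 0"
  by (simp add: matrix_mul_lzero)

lemma mpow_conj:
  assumes "P ** Q = mat 1" "Q ** P = mat 1"
  shows "mpow (P ** B ** Q) m = P ** mpow B m ** Q"
proof (induction m)
  case 0
  then show ?case
    using assms(1) by simp
next
  case (Suc m)
  have "mpow (P ** B ** Q) (Suc m) = P ** B ** (Q ** P) ** mpow B m ** Q"
    using Suc by (simp add: matrix_mul_assoc)
  then show ?case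
    using assms(2) by (simp add: matrix_mul_assoc)
qed

lemma opnorm_mpow_le: "opnorm (mpow A m) \<le> opnorm A ^ m"
proof (induction m)
  case 0
  then show ?case
    using opnorm_mat_1_le by simp
next
  case (Suc m)
  have "opnorm (mpow A (Suc m)) \<le> opnorm A * opnorm (mpow A m)"
    by (simp add: opnorm_mult_le)
  also have "\<dots> \<le> opnorm A * opnorm A ^ m"
    by (intro mult_left_mono Suc opnorm_nonneg)
  finally show ?case
    by simp
qed

lemma norm_mpow_le: "norm (mpow A k) \<le> real CARD('n)^2 * opnorm (A::complex^'n^'n) ^ k"
  using norm_matrix_le_opnorm[of "mpow A k"] opnorm_mpow_le[of A k]
  by (meson mult_left_mono of_nat_0_le_iff order_trans zero_le_power)

lemma summable_scaleR_mpow: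
  fixes A :: "complex^'n^'n"
  assumes "opnorm A < 1" and "\<And>k. \<bar>c k\<bar> \<le> 1"
  shows "summable (\<lambda>k. c k *\<^sub>R mpow A (k + m))"
proof (rule summable_comparison_test')
  show "summable (\<lambda>k. real CARD('n)^2 * opnorm A ^ k)"
    using assms(1) opnorm_nonneg[of A] by (intro summable_mult summable_geometric) simp
  fix k
  have "norm (c k *\<^sub>R mpow A (k + m)) \<le> norm (mpow A (k + m))"
    using assms(2)[of k] by (simp add: mult_left_le_one_le)
  also have "\<dots> \<le> real CARD('n)^2 * opnorm A ^ (k + m)"
    by (rule norm_mpow_le)
  also have "\<dots> \<le> real CARD('n)^2 * opnorm A ^ k"
    using assms(1) opnorm_nonneg[of A] by (intro mult_left_mono power_decreasing) auto
  finally show "norm (c k *\<^sub>R mpow A (k + m)) \<le> real CARD('n)^2 * opnorm A ^ k" .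
qed

lemma mlog_sums:
  fixes u :: "complex^'n^'n"
  assumes "opnorm (u - mat 1) < 1"
  shows "(\<lambda>k. ((-1)^k / real (Suc k)) *\<^sub>R mpow (u - mat 1) (Suc k)) sums mlog u"
proof -
  have "summable (\<lambda>k. ((-1)^k / real (Suc k)) *\<^sub>R mpow (u - mat 1) (k + 1))"
    using assms by (rule summable_scaleR_mpow) (simp add: abs_div power_abs)
  then show ?thesis
    unfolding mlog_def by (simp add: summable_sums)
qed

lemma trace_mlog_sums:
  fixes u :: "complex^'n^'n"
  assumes "opnorm (u - mat 1) < 1"
  shows "(\<lambda>k. ((-1)^k / real (Suc k)) *\<^sub>R trace (mpow (u - mat 1) (Suc k))) sums trace (mlog u)"
  using bounded_linear.sums[OF bounded_linear_trace mlog_sums[OF assms]]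
  by (simp only: trace_scaleR)

lemma mlog_mat_1: "mlog (mat 1) = 0"
  by (simp add: mlog_def mpow_zero_Suc del: mpow.simps)

lemma mlog_conj:
  fixes u P Q :: "complex^'n^'n"
  assumes "opnorm (u - mat 1) < 1" and "P ** Q = mat 1" "Q ** P = mat 1"
  shows "mlog (P ** u ** Q) = P ** mlog u ** Q"
proof -
  have "bounded_linear (\<lambda>M. P ** M ** Q)"
    by (rule bounded_linear_compose[OF bounded_bilinear.bounded_linear_left bounded_bilinear.bounded_linear_right,
          OF bounded_bilinear_matrix_mult bounded_bilinear_matrix_mult])
  from bounded_linear.sums[OF this mlog_sums[OF assms(1)]]
  have "(\<lambda>k. ((-1)^k / real (Suc k)) *\<^sub>R mpow (P ** (u - mat 1) ** Q) (Suc k)) sums (P ** mlog u ** Q)"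
    by (simp add: mpow_conj[OF assms(2,3)] matrix_mul_scaleR_left matrix_mul_scaleR_right del: mpow.simps)
  moreover have "P ** (u - mat 1) ** Q = P ** u ** Q - mat 1"
    using assms(2) by (simp add: matrix_diff_ldistrib matrix_diff_rdistrib)
  ultimately show ?thesis
    unfolding mlog_def by (simp add: sums_iff)
qed

lemma neumann_series:
  fixes u :: "complex^'n^'n"
  assumes "opnorm (u - mat 1) < 1"
  shows "invertible u" and "(\<lambda>k. ((-1)^k :: real) *\<^sub>R mpow (u - mat 1) k) sums matrix_inv u"
proof -
  define g where "g k = ((-1)^k :: real) *\<^sub>R mpow (u - mat 1) k" for k
  have "summable g"
    unfolding g_def using summable_scaleR_mpow[OF assms, of _ 0] by simp
  have telescope: "(\<lambda>k. g k - g (Suc k)) sums mat 1"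
    using telescope_sums'[OF summable_LIMSEQ_zero[OF \<open>summable g\<close>]] by (simp add: g_def)
  have "u ** g k = g k - g (Suc k)" "g k ** u = g k - g (Suc k)" for k
  proof -
    have "u ** M = M + (u - mat 1) ** M" "M ** u = M + M ** (u - mat 1)" for M
      by (simp_all add: matrix_diff_ldistrib matrix_diff_rdistrib)
    then show "u ** g k = g k - g (Suc k)" "g k ** u = g k - g (Suc k)"
      by (simp add: g_def matrix_mul_scaleR_right scaleR_add_right,
          simp add: g_def matrix_mul_scaleR_left mpow_Suc_right scaleR_add_right del: mpow.simps)
  qed
  then have "(\<lambda>k. g k - g (Suc k)) sums (u ** suminf g)" "(\<lambda>k. g k - g (Suc k)) sums (suminf g ** u)"
    using bounded_linear.sums[OF bounded_bilinear.bounded_linear_right[OF bounded_bilinear_matrix_mult]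
        summable_sums[OF \<open>summable g\<close>], of u]
      bounded_linear.sums[OF bounded_bilinear.bounded_linear_left[OF bounded_bilinear_matrix_mult]
        summable_sums[OF \<open>summable g\<close>], of u]
    by simp_all
  then have "u ** suminf g = mat 1" "suminf g ** u = mat 1"
    using sums_unique2[OF _ telescope] by blast+
  then show "invertible u" "g sums matrix_inv u"
    unfolding invertible_def using matrix_inv_unique[of u "suminf g"] summable_sums[OF \<open>summable g\<close>]
    by auto
qed

section \<open>Additivity of the trace of the logarithm\<close>

lemma has_vector_derivative_series:
  fixes f :: "nat \<Rightarrow> real \<Rightarrow> 'a::banach"
  assumes "convex S"
    and "\<And>n x. x \<in> S \<Longrightarrow> (f n has_vector_derivative f' n x) (at x within S)"
    and "uniform_limit S (\<lambda>n x. \<Sum>i<n. f' i x) g' sequentially"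
    and "x0 \<in> S" and "summable (\<lambda>n. f n x0)"
  shows "\<exists>g. \<forall>x\<in>S. (\<lambda>n. f n x) sums g x \<and> (g has_vector_derivative g' x) (at x within S)"
  unfolding has_vector_derivative_def
proof (rule has_derivative_series)
  show "convex S" "x0 \<in> S" "(\<lambda>n. f n x0) sums suminf (\<lambda>n. f n x0)"
    using assms(1,4,5) by (simp_all add: summable_sums)
  show "(f n has_derivative (\<lambda>h. h *\<^sub>R f' n x)) (at x within S)" if "x \<in> S" for n x
    using assms(2)[OF that] by (simp add: has_vector_derivative_def)
  show "\<forall>\<^sub>F n in sequentially. \<forall>x\<in>S. \<forall>h. norm ((\<Sum>i<n. h *\<^sub>R f' i x) - h *\<^sub>R g' x) \<le> e * norm h"
    if "e > 0" for e
    using uniform_limitD[OF assms(3) that]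
  proof (rule eventually_mono)
    fix n
    assume "\<forall>x\<in>S. dist (\<Sum>i<n. f' i x) (g' x) < e"
    then have "norm ((\<Sum>i<n. f' i x) - g' x) \<le> e" if "x \<in> S" for x
      using that by (simp add: dist_norm less_imp_le)
    then show "\<forall>x\<in>S. \<forall>h. norm ((\<Sum>i<n. h *\<^sub>R f' i x) - h *\<^sub>R g' x) \<le> e * norm h"
      by (auto simp: scaleR_sum_right[symmetric] scaleR_diff_right[symmetric] mult.commute[of e]
          intro!: mult_left_mono)
  qed
qed

lemma has_vector_derivative_mpow:
  fixes A :: "real \<Rightarrow> complex^'n^'n"
  assumes "(A has_vector_derivative A') (at t within S)"
  shows "((\<lambda>t. mpow (A t) m) has_vector_derivative
           (\<Sum>j<m. mpow (A t) j ** A' ** mpow (A t) (m - Suc j))) (at t within S)"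
proof (induction m)
  case 0
  then show ?case
    by (simp add: has_vector_derivative_const)
next
  case (Suc m)
  have "A t ** (\<Sum>j<m. mpow (A t) j ** A' ** mpow (A t) (m - Suc j)) + A' ** mpow (A t) m
      = (\<Sum>j<Suc m. mpow (A t) j ** A' ** mpow (A t) (Suc m - Suc j))"
    by (simp only: sum.lessThan_Suc_shift) (simp add: matrix_mul_sum_right matrix_mul_assoc)
  then show ?case
    using bounded_bilinear.has_vector_derivative[OF bounded_bilinear_matrix_mult assms Suc] by simp
qed

lemma has_vector_derivative_trace_mpow:
  fixes A :: "real \<Rightarrow> complex^'n^'n"
  assumes "(A has_vector_derivative A') (at t within S)"
  shows "((\<lambda>t. trace (mpow (A t) (Suc m))) has_vector_derivative
           of_nat (Suc m) * trace (mpow (A t) m ** A')) (at t within S)"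
proof -
  have "trace (mpow (A t) j ** A' ** mpow (A t) (m - j)) = trace (mpow (A t) m ** A')"
    if "j \<le> m" for j
  proof -
    have "trace (mpow (A t) j ** A' ** mpow (A t) (m - j)) = trace (mpow (A t) (m - j) ** mpow (A t) j ** A')"
      by (metis matrix_mul_assoc trace_mul_sym)
    also have "\<dots> = trace (mpow (A t) m ** A')"
      using that by (simp add: mpow_add[symmetric] del: mpow.simps)
    finally show ?thesis .
  qed
  then have "trace (\<Sum>j<Suc m. mpow (A t) j ** A' ** mpow (A t) (Suc m - Suc j))
      = (\<Sum>j<Suc m. trace (mpow (A t) m ** A'))"
    unfolding trace_sum by (intro sum.cong) auto
  also have "\<dots> = of_nat (Suc m) * trace (mpow (A t) m ** A')"
    by (simp only: sum_constant card_lessThan)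
  finally have derivative_eq: "trace (\<Sum>j<Suc m. mpow (A t) j ** A' ** mpow (A t) (Suc m - Suc j))
      = of_nat (Suc m) * trace (mpow (A t) m ** A')" .
  show ?thesis
    unfolding derivative_eq[symmetric]
    by (rule bounded_linear.has_vector_derivative[OF bounded_linear_trace has_vector_derivative_mpow[OF assms]])
qed

lemma has_vector_derivative_trace_log_term:
  fixes A :: "real \<Rightarrow> complex^'n^'n"
  assumes "(A has_vector_derivative A') (at t within S)"
  shows "((\<lambda>t. ((-1)^k / real (Suc k)) *\<^sub>R trace (mpow (A t) (Suc k))) has_vector_derivative
           ((-1)^k :: real) *\<^sub>R trace (mpow (A t) k ** A')) (at t within S)"
proof -
  have derivative_eq: "((-1)^k / real (Suc k)) *\<^sub>R (of_nat (Suc k) * trace (mpow (A t) k ** A'))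
      = ((-1)^k :: real) *\<^sub>R trace (mpow (A t) k ** A')"
    unfolding scaleR_conv_of_real by (simp del: of_nat_Suc)
  show ?thesis
    unfolding derivative_eq[symmetric]
    by (rule bounded_linear.has_vector_derivative[OF bounded_linear_scaleR_right
          has_vector_derivative_trace_mpow[OF assms]])
qed

lemma uniform_limit_trace_neumann_series:
  fixes B :: "'a \<Rightarrow> complex^'n^'n"
  assumes "0 \<le> r" "r < 1" and "\<And>s. s \<in> S \<Longrightarrow> opnorm (B s) \<le> r"
  shows "uniform_limit S (\<lambda>n s. \<Sum>k<n. ((-1)^k :: real) *\<^sub>R trace (mpow (B s) k ** D))
           (\<lambda>s. \<Sum>k. ((-1)^k :: real) *\<^sub>R trace (mpow (B s) k ** D)) sequentially"
proof (rule Weierstrass_m_test)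
  show "summable (\<lambda>k. real CARD('n) * (r^k * opnorm D))"
    using assms(1,2) by (intro summable_mult summable_mult2 summable_geometric) simp
  show "norm (((-1)^k :: real) *\<^sub>R trace (mpow (B s) k ** D)) \<le> real CARD('n) * (r^k * opnorm D)"
    if "s \<in> S" for k s
  proof -
    have "norm (((-1)^k :: real) *\<^sub>R trace (mpow (B s) k ** D)) \<le> real CARD('n) * opnorm (mpow (B s) k ** D)"
      by (simp add: norm_trace_le_opnorm)
    also have "\<dots> \<le> real CARD('n) * (opnorm (mpow (B s) k) * opnorm D)"
      by (intro mult_left_mono opnorm_mult_le) simp
    also have "\<dots> \<le> real CARD('n) * (r^k * opnorm D)"
      using opnorm_mpow_le[of "B s" k] power_mono[OF assms(3)[OF that] opnorm_nonneg, of k]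
      by (intro mult_left_mono mult_right_mono opnorm_nonneg) auto
    finally show ?thesis .
  qed
qed

lemma has_vector_derivative_trace_mlog:
  fixes u D :: "complex^'n^'n"
  assumes "convex S" and "r < 1" and near: "\<And>s. s \<in> S \<Longrightarrow> opnorm (u + s *\<^sub>R D - mat 1) \<le> r"
    and "t \<in> S"
  shows "((\<lambda>s. trace (mlog (u + s *\<^sub>R D))) has_vector_derivative
           trace (matrix_inv (u + t *\<^sub>R D) ** D)) (at t within S)"
proof -
  let ?B = "\<lambda>s. u + s *\<^sub>R D - mat 1"
  define f where "f k s = ((-1)^k / real (Suc k)) *\<^sub>R trace (mpow (?B s) (Suc k))" for k s
  define f' where "f' k s = ((-1)^k :: real) *\<^sub>R trace (mpow (?B s) k ** D)" for k s
  have near_1: "opnorm (?B s) < 1" if "s \<in> S" for s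
    using near[OF that] \<open>r < 1\<close> by linarith
  have "0 \<le> r"
    using near[OF \<open>t \<in> S\<close>] opnorm_nonneg order_trans by blast
  have "(?B has_vector_derivative D) (at s within S)" for s
    by (auto intro!: derivative_eq_intros)
  then have "(f k has_vector_derivative f' k s) (at s within S)" for k s
    unfolding f_def[abs_def] f'_def by (rule has_vector_derivative_trace_log_term)
  moreover have "uniform_limit S (\<lambda>n s. \<Sum>k<n. f' k s) (\<lambda>s. \<Sum>k. f' k s) sequentially"
    unfolding f'_def using \<open>0 \<le> r\<close> \<open>r < 1\<close> near by (rule uniform_limit_trace_neumann_series)
  moreover have "summable (\<lambda>k. f k t)"
    using trace_mlog_sums[OF near_1[OF \<open>t \<in> S\<close>]] by (auto simp: f_def sums_iff)
  ultimately obtain g where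
    g_sums: "\<And>s. s \<in> S \<Longrightarrow> (\<lambda>k. f k s) sums g s" and
    g_deriv: "(g has_vector_derivative (\<Sum>k. f' k t)) (at t within S)"
    using has_vector_derivative_series[OF \<open>convex S\<close>] \<open>t \<in> S\<close> by metis
  have "g s = trace (mlog (u + s *\<^sub>R D))" if "s \<in> S" for s
  proof -
    have "(\<lambda>k. f k s) sums trace (mlog (u + s *\<^sub>R D))"
      unfolding f_def using trace_mlog_sums[OF near_1[OF that]] .
    then show ?thesis
      by (rule sums_unique2[OF g_sums[OF that]])
  qed
  moreover have "(\<Sum>k. f' k t) = trace (matrix_inv (u + t *\<^sub>R D) ** D)"
  proof -
    have "bounded_linear (\<lambda>M. trace (M ** D))"
      by (rule bounded_linear_compose[OF bounded_linear_trace
            bounded_bilinear.bounded_linear_left[OF bounded_bilinear_matrix_mult]])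
    from bounded_linear.sums[OF this neumann_series(2)[OF near_1[OF \<open>t \<in> S\<close>]]]
    show ?thesis
      by (simp add: f'_def sums_iff matrix_mul_scaleR_left trace_scaleR)
  qed
  ultimately show ?thesis
    using has_vector_derivative_transform[OF \<open>t \<in> S\<close> _ g_deriv] by simp
qed

lemma trace_matrix_inv_mult_right:
  fixes w y X :: "complex^'n^'n"
  assumes "invertible w" "invertible y"
  shows "trace (matrix_inv (w ** y) ** (X ** y)) = trace (matrix_inv w ** X)"
proof -
  have "trace (matrix_inv (w ** y) ** (X ** y)) = trace (matrix_inv y ** (matrix_inv w ** X ** y))"
    using matrix_inv_mult[OF assms] by (simp add: matrix_mul_assoc)
  also have "\<dots> = trace (matrix_inv w ** X ** (y ** matrix_inv y))"
    by (metis matrix_mul_assoc trace_mul_sym)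
  finally show ?thesis
    using invertible_matrix_inv(1)[OF assms(2)] by simp
qed

lemma trace_mlog_mult:
  fixes x y :: "complex^'n^'n"
  assumes small: "opnorm (x - mat 1) + opnorm (y - mat 1) < 1" and "opnorm y \<le> 1"
  shows "trace (mlog (x ** y)) = trace (mlog x) + trace (mlog y)"
proof -
  let ?r = "opnorm (x - mat 1) + opnorm (y - mat 1)"
  let ?X = "x - mat 1"
  have opnorm_scaleR_le: "opnorm (s *\<^sub>R M) \<le> opnorm M" if "s \<in> {0..1}" for s M
    using that by (simp add: opnorm_scaleR mult_left_le_one_le opnorm_nonneg)
  have near_left: "opnorm (mat 1 + s *\<^sub>R ?X - mat 1) \<le> ?r" if "s \<in> {0..1}" for s
    using opnorm_scaleR_le[OF that, of ?X] opnorm_nonneg[of "y - mat 1"] by simp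
  have near_right: "opnorm (y + s *\<^sub>R (?X ** y) - mat 1) \<le> ?r" if "s \<in> {0..1}" for s
  proof -
    have "opnorm (y + s *\<^sub>R (?X ** y) - mat 1) \<le> opnorm (y - mat 1) + opnorm (s *\<^sub>R (?X ** y))"
      using opnorm_triangle[of "y - mat 1" "s *\<^sub>R (?X ** y)"] by (simp add: algebra_simps)
    also have "opnorm (s *\<^sub>R (?X ** y)) \<le> opnorm ?X * opnorm y"
      using opnorm_scaleR_le[OF that] opnorm_mult_le order_trans by blast
    also have "opnorm ?X * opnorm y \<le> opnorm ?X"
      using \<open>opnorm y \<le> 1\<close> by (simp add: mult_left_le opnorm_nonneg)
    finally show ?thesis
      by simp
  qed
  have factor: "y + s *\<^sub>R (?X ** y) = (mat 1 + s *\<^sub>R ?X) ** y" for s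
    by (simp add: matrix_add_rdistrib matrix_mul_scaleR_left)
  have same_derivative: "trace (matrix_inv (y + s *\<^sub>R (?X ** y)) ** (?X ** y))
      = trace (matrix_inv (mat 1 + s *\<^sub>R ?X) ** ?X)" if "s \<in> {0..1}" for s
    unfolding factor
    using near_left[OF that] small opnorm_nonneg[of ?X]
    by (intro trace_matrix_inv_mult_right neumann_series(1)) simp_all
  define F where "F s = trace (mlog (y + s *\<^sub>R (?X ** y))) - trace (mlog (mat 1 + s *\<^sub>R ?X))" for s
  have "(F has_vector_derivative 0) (at s within {0..1})" if "s \<in> {0..1}" for s
    using has_vector_derivative_diff[OF
        has_vector_derivative_trace_mlog[OF convex_real_interval(5) small near_right that]
        has_vector_derivative_trace_mlog[OF convex_real_interval(5) small near_left that]]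
    unfolding F_def same_derivative[OF that] by simp
  then obtain c where "\<And>s. s \<in> {0..1} \<Longrightarrow> F s = c"
    using has_vector_derivative_zero_constant[of "{0..1}" F] by blast
  then have "F 1 = F 0"
    by simp
  moreover have "y + ?X ** y = x ** y"
    by (simp add: matrix_diff_rdistrib)
  ultimately show ?thesis
    unfolding F_def by (simp add: mlog_mat_1 trace_def[of 0] diff_eq_eq add.commute)
qed

section \<open>The cocycle identity\<close>

lemma trace_mlog_unitary_conj:
  fixes u x :: "complex^'n^'n"
  assumes "unitary_mat x" and "opnorm (u - mat 1) < 1"
  shows "trace (mlog (x ** u ** cadj x)) = trace (mlog u)"
proof -
  have "x ** cadj x = mat 1" "cadj x ** x = mat 1"
    using assms(1) unfolding unitary_mat_def by auto
  then have "trace (mlog (x ** u ** cadj x)) = trace (cadj x ** x ** mlog u)"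
    by (metis mlog_conj[OF assms(2)] matrix_mul_assoc trace_mul_sym)
  with \<open>cadj x ** x = mat 1\<close> show ?thesis
    by simp
qed

lemma trace_mlog_cocycle:
  fixes x y z p q r :: "complex^'n^'n"
  assumes unitary: "unitary_mat x" "unitary_mat z" "unitary_mat p" "unitary_mat q" "unitary_mat r"
    and defects: "opnorm (p - x ** y) < 1/2" "opnorm (r - p ** z) < 1/2"
      "opnorm (r - x ** q) < 1/2" "opnorm (q - y ** z) < 1/2"
  shows "trace (mlog (x ** y ** cadj p)) + trace (mlog (p ** z ** cadj r))
       = trace (mlog (x ** q ** cadj r)) + trace (mlog (y ** z ** cadj q))"
proof -
  define v where "v = x ** (y ** z ** cadj q) ** cadj x"
  have near_1: "opnorm (x ** y ** cadj p - mat 1) < 1/2" "opnorm (p ** z ** cadj r - mat 1) < 1/2"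
    "opnorm (x ** q ** cadj r - mat 1) < 1/2" "opnorm (y ** z ** cadj q - mat 1) < 1/2"
    using opnorm_mult_cadj_minus_mat_1_le unitary defects by (meson order.strict_trans1)+
  have "opnorm (v - mat 1) \<le> opnorm (x - x ** (y ** z ** cadj q))"
    unfolding v_def by (rule opnorm_mult_cadj_minus_mat_1_le[OF unitary(1)])
  also have "\<dots> \<le> opnorm x * opnorm (mat 1 - y ** z ** cadj q)"
    using opnorm_mult_le[of x "mat 1 - y ** z ** cadj q"] by (simp add: matrix_diff_ldistrib)
  also have "\<dots> \<le> opnorm (y ** z ** cadj q - mat 1)"
    using opnorm_unitary_le[OF unitary(1)]
    by (simp add: opnorm_minus_commute mult_left_le_one_le opnorm_nonneg)
  finally have near_v: "opnorm (v - mat 1) < 1/2"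
    using near_1(4) by simp
  have "x ** y ** cadj p ** (p ** z ** cadj r) = x ** y ** z ** cadj r"
    by (simp add: matrix_mul_assoc unitary_mat_cancel[OF unitary(3)])
  moreover have "v ** (x ** q ** cadj r) = x ** y ** z ** cadj r"
    unfolding v_def
    by (simp add: matrix_mul_assoc unitary_mat_cancel[OF unitary(1)] unitary_mat_cancel[OF unitary(4)])
  ultimately have same_product: "x ** y ** cadj p ** (p ** z ** cadj r) = v ** (x ** q ** cadj r)"
    by simp
  have unitary_factors: "unitary_mat (p ** z ** cadj r)" "unitary_mat (x ** q ** cadj r)"
    using unitary by (simp_all add: unitary_mat_mult unitary_mat_cadj)
  have "trace (mlog (x ** y ** cadj p)) + trace (mlog (p ** z ** cadj r))
      = trace (mlog (x ** y ** cadj p ** (p ** z ** cadj r)))"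
    using near_1 by (intro trace_mlog_mult[symmetric] opnorm_unitary_le unitary_factors) simp
  also have "\<dots> = trace (mlog v) + trace (mlog (x ** q ** cadj r))"
    unfolding same_product
    using near_1 near_v by (intro trace_mlog_mult opnorm_unitary_le unitary_factors) simp
  also have "trace (mlog v) = trace (mlog (y ** z ** cadj q))"
    unfolding v_def using near_1(4) by (intro trace_mlog_unitary_conj unitary(1)) simp
  finally show ?thesis
    by simp
qed

theorem proposition2p6:
  fixes G :: "('a, 'b) monoid_scheme"
    and \<rho> :: "'a \<Rightarrow> complex^'n^'n"
    and S :: "'a set"
    and \<delta> :: real
    and a b c :: 'a
  assumes "group G"
    and "\<forall>g\<in>carrier G. unitary_mat (\<rho> g)"
    and "\<rho> \<one>\<^bsub>G\<^esub> = mat 1"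
    and "S \<subseteq> carrier G" and "finite S"
    and "0 < \<delta>" and "\<delta> \<le> 1/2"
    and "\<forall>s\<in>S. \<forall>t\<in>S. opnorm (\<rho> (s \<otimes>\<^bsub>G\<^esub> t) - \<rho> s ** \<rho> t) < \<delta>"
    and "a \<in> S" and "b \<in> S" and "c \<in> S"
    and "a \<otimes>\<^bsub>G\<^esub> b \<in> S" and "b \<otimes>\<^bsub>G\<^esub> c \<in> S"
  shows "omega G \<rho> a b + omega G \<rho> (a \<otimes>\<^bsub>G\<^esub> b) c
       = omega G \<rho> a (b \<otimes>\<^bsub>G\<^esub> c) + omega G \<rho> b c"
proof -
  interpret group G by fact
  have in_carrier: "a \<in> carrier G" "b \<in> carrier G" "c \<in> carrier G"
    using assms(4,9-11) by auto
  have unitary: "unitary_mat (\<rho> g)" if "g \<in> carrier G" for g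
    using assms(2) that by blast
  have omega_eq: "omega G \<rho> s t
      = trace (mlog (\<rho> s ** \<rho> t ** cadj (\<rho> (s \<otimes>\<^bsub>G\<^esub> t)))) / (2 * complex_of_real pi * \<i>)"
    if "s \<in> carrier G" "t \<in> carrier G" for s t
    unfolding omega_def using that by (simp add: matrix_inv_unitary unitary)
  have defect: "opnorm (\<rho> (s \<otimes>\<^bsub>G\<^esub> t) - \<rho> s ** \<rho> t) < 1/2" if "s \<in> S" "t \<in> S" for s t
    using assms(7,8) that by fastforce
  have "trace (mlog (\<rho> a ** \<rho> b ** cadj (\<rho> (a \<otimes>\<^bsub>G\<^esub> b))))
        + trace (mlog (\<rho> (a \<otimes>\<^bsub>G\<^esub> b) ** \<rho> c ** cadj (\<rho> (a \<otimes>\<^bsub>G\<^esub> b \<otimes>\<^bsub>G\<^esub> c))))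
      = trace (mlog (\<rho> a ** \<rho> (b \<otimes>\<^bsub>G\<^esub> c) ** cadj (\<rho> (a \<otimes>\<^bsub>G\<^esub> b \<otimes>\<^bsub>G\<^esub> c))))
        + trace (mlog (\<rho> b ** \<rho> c ** cadj (\<rho> (b \<otimes>\<^bsub>G\<^esub> c))))"
    using in_carrier assms(9-13) defect[of a "b \<otimes>\<^bsub>G\<^esub> c"]
    by (intro trace_mlog_cocycle unitary defect) (auto simp: m_assoc)
  with in_carrier show ?thesis
    by (simp add: omega_eq m_assoc add_divide_distrib[symmetric])
qed

end
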